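(* For $\alpha>1$ let $X_\alpha$ be a Pareto random variable with $\mathbb P(X_\alpha>x)=(x/x_{\min})^{-\alpha}$ for $x\ge x_{\min}$, where $x_{\min}=x_{\min}(\alpha)>0$ (e.g. $x_{\min}=(\alpha-1)/\alpha$, so that $\mathbb E[X_\alpha]=1$). Then for every $q\in(0,1)$: (i) $\kappa_q(X_\alpha)=q^{\frac{\alpha-1}{\alpha}}$, independently of $x_{\min}$; (ii) the map $\alpha\mapsto \kappa_q(X_\alpha)$ is strictly convex on $(1,\infty)$; (iii) consequently, if $\alpha_1,\dots,\alpha_m>1$, $\omega_1,\dots,\omega_m>0$ with $\sum_i\omega_i=1$, $\bar\alpha=\sum_{i=1}^m\omega_i\alpha_i$, the $X_{\alpha_i}$ are normalized so that $\mathbb E[X_{\alpha_i}]=1$ for all $i$, and $X$ has the mixture distribution $\sum_{i=1}^m\omega_i\,\mathrm{Law}(X_{\alpha_i})$, then $$\kappa_q(X)\ \ge\ \sum_{i=1}^m\omega_i\,\kappa_q(X_{\alpha_i})\ \ge\ \kappa_q(X_{\bar\alpha}).$$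
   Context: For a positive random variable $Y$ with continuous distribution and finite mean, and $q\in(0,1)$, the exceedance threshold is $h_Y(q)=\inf\{h\ge 0:\ \mathbb P(Y>h)\le q\}$ and the (theoretical) quantile contribution is $$\kappa_q(Y)=q\,\frac{\mathbb E[Y\mid Y>h_Y(q)]}{\mathbb E[Y]}=\frac{\mathbb E[Y\mathbf 1_{Y>h_Y(q)}]}{\mathbb E[Y]}.$$ *)

theory Defs
  imports "HOL-Probability.Probability"
begin

definition exc_threshold :: "'a measure \<Rightarrow> ('a \<Rightarrow> real) \<Rightarrow> real \<Rightarrow> real" where
  "exc_threshold M Y q = Inf {h. 0 \<le> h \<and> measure M {w \<in> space M. Y w > h} \<le> q}"

definition qcontrib :: "'a measure \<Rightarrow> ('a \<Rightarrow> real) \<Rightarrow> real \<Rightarrow> real" where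
  "qcontrib M Y q =
     (\<integral>w. Y w * indicator {exc_threshold M Y q<..} (Y w) \<partial>M) / (\<integral>w. Y w \<partial>M)"

definition is_pareto :: "'a measure \<Rightarrow> ('a \<Rightarrow> real) \<Rightarrow> real \<Rightarrow> real \<Rightarrow> bool" where
  "is_pareto M X \<alpha> xm \<longleftrightarrow> prob_space M \<and> X \<in> borel_measurable M \<and> xm > 0 \<and>
     (\<forall>x\<ge>xm. measure M {w \<in> space M. X w > x} = (x / xm) powr (-\<alpha>))"

definition strict_convex_on :: "real set \<Rightarrow> (real \<Rightarrow> real) \<Rightarrow> bool" where
  "strict_convex_on S f \<longleftrightarrow> (\<forall>x\<in>S. \<forall>y\<in>S. \<forall>t::real. x \<noteq> y \<and> 0 < t \<and> t < 1 \<longrightarrow>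
      f ((1 - t) * x + t * y) < (1 - t) * f x + t * f y)"

end

theory Submission
  imports Defs
begin

text \<open>
  All three parts rest on explicit formulas for a Pareto variable
  X with shape a > 1 and scale xm: its tail is P(X > t) = min 1 ((t/xm)^(-a)),
  its truncated mean is E[X; X > h] = a/(a-1) xm^a h^(1-a) for h \<ge> xm (computed
  with the layer-cake formula), its mean is a xm/(a-1) and its exceedance
  threshold is xm q^(-1/a).  Dividing gives part (i), kappa_q = q^((a-1)/a).
  Part (ii) follows because a \<mapsto> (a-1)/a \<cdot> ln q = ln q - ln q / a is strictly
  convex (1/a is, and -ln q > 0) and exp is convex and increasing.
  For part (iii) the second inequality is Jensen's inequality for this convex
  function.  The first one is a general fact about mixtures of mean-one laws:
  the truncated mean of a mixture is the weighted sum of truncated means (layer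
  cake again), and for each component the excess E[(Y - h); Y > c] is maximal at
  c = h, which compares the component's own threshold with the mixture's one.
\<close>

subsection \<open>Layer-cake formula\<close>

lemma layer_cake:
  fixes f :: "'a \<Rightarrow> real"
  assumes M: "sigma_finite_measure M" and f: "f \<in> borel_measurable M" and nn: "\<And>w. 0 \<le> f w"
  shows "(\<integral>\<^sup>+w. ennreal (f w) \<partial>M) =
         (\<integral>\<^sup>+t. indicator {0..} t * emeasure M {w\<in>space M. t < f w} \<partial>lborel)"
proof -
  interpret pair_sigma_finite M lborel
    using M by (intro pair_sigma_finite.intro) (auto simp: lborel.sigma_finite_measure_axioms)
  have "(\<integral>\<^sup>+w. ennreal (f w) \<partial>M) =
        (\<integral>\<^sup>+w. (\<integral>\<^sup>+t. indicator {w\<in>space M. t < f w} w * indicator {0..} t \<partial>lborel) \<partial>M)"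
  proof (rule nn_integral_cong)
    fix w assume w: "w \<in> space M"
    have "(\<integral>\<^sup>+t. indicator {w\<in>space M. t < f w} w * indicator {0..} t \<partial>lborel)
         = (\<integral>\<^sup>+t. indicator {0..<f w} t \<partial>lborel)"
      using w by (intro nn_integral_cong) (auto simp: indicator_def)
    also have "\<dots> = ennreal (f w)" using nn[of w] by simp
    finally show "ennreal (f w) =
        (\<integral>\<^sup>+t. indicator {w\<in>space M. t < f w} w * indicator {0..} t \<partial>lborel)" by simp
  qed
  also have "\<dots> = (\<integral>\<^sup>+t. (\<integral>\<^sup>+w. indicator {w\<in>space M. t < f w} w * indicator {0..} t \<partial>M) \<partial>lborel)"
    by (rule Fubini'[symmetric]) (use f in measurable)
  also have "\<dots> = (\<integral>\<^sup>+t. indicator {0..} t * emeasure M {w\<in>space M. t < f w} \<partial>lborel)"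
  proof (rule nn_integral_cong)
    fix t :: real
    have St: "{w\<in>space M. t < f w} \<in> sets M" using f by measurable
    have "(\<integral>\<^sup>+w. indicator {w\<in>space M. t < f w} w * indicator {0..} t \<partial>M)
      = (\<integral>\<^sup>+w. indicator {w\<in>space M. t < f w} w \<partial>M) * indicator {0..} t"
      by (rule nn_integral_multc) (use St in simp)
    then show "(\<integral>\<^sup>+w. indicator {w\<in>space M. t < f w} w * indicator {0..} t \<partial>M)
        = indicator {0..} t * emeasure M {w\<in>space M. t < f w}"
      using St by (simp add: mult.commute)
  qed
  finally show ?thesis .
qed

text \<open>The layer-cake formula for the truncated mean E[Y; Y > h]: the tail of
  Y 1_{Y > h} at level t \<ge> 0 is the tail of Y at level max h t.\<close>
lemma layer_cake_trunc:
  fixes Y :: "'a \<Rightarrow> real"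
  assumes M: "sigma_finite_measure M" and Y: "Y \<in> borel_measurable M" and h: "0 \<le> h"
  shows "(\<integral>\<^sup>+w. ennreal (Y w * indicator {h<..} (Y w)) \<partial>M) =
         (\<integral>\<^sup>+t. indicator {0..} t * emeasure M {w\<in>space M. max h t < Y w} \<partial>lborel)"
proof -
  have "(\<integral>\<^sup>+w. ennreal (Y w * indicator {h<..} (Y w)) \<partial>M) =
     (\<integral>\<^sup>+t. indicator {0..} t * emeasure M {w\<in>space M. t < Y w * indicator {h<..} (Y w)} \<partial>lborel)"
    by (rule layer_cake[OF M]) (use Y h in \<open>auto simp: indicator_def\<close>)
  also have "\<dots> = (\<integral>\<^sup>+t. indicator {0..} t * emeasure M {w\<in>space M. max h t < Y w} \<partial>lborel)"
  proof (rule nn_integral_cong)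
    fix t :: real
    have "0 \<le> t \<Longrightarrow> {w\<in>space M. t < Y w * indicator {h<..} (Y w)} = {w\<in>space M. max h t < Y w}"
      using h by (auto simp: indicator_def)
    then show "indicator {0..} t * emeasure M {w\<in>space M. t < Y w * indicator {h<..} (Y w)} =
          indicator {0..} t * emeasure M {w\<in>space M. max h t < Y w}"
      by (cases "0 \<le> t") auto
  qed
  finally show ?thesis .
qed

subsection \<open>Truncated means and the variational inequality\<close>

lemma integrable_trunc:
  fixes Y :: "'a \<Rightarrow> real"
  assumes "integrable N Y"
  shows "integrable N (\<lambda>w. Y w * indicator {c<..} (Y w))"
proof (rule Bochner_Integration.integrable_bound[OF assms])
  show "(\<lambda>w. Y w * indicator {c<..} (Y w)) \<in> borel_measurable N"
    using assms by measurable
  show "AE x in N. norm (Y x * indicator {c<..} (Y x)) \<le> norm (Y x)"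
    by (auto simp: indicator_def)
qed

lemma trunc_excess_eq:
  fixes Y :: "'a \<Rightarrow> real"
  assumes N: "prob_space N" and Y: "integrable N Y"
  shows "(\<integral>w. (Y w - h) * indicator {c<..} (Y w) \<partial>N) =
         (\<integral>w. Y w * indicator {c<..} (Y w) \<partial>N) - h * measure N {w\<in>space N. c < Y w}"
proof -
  interpret prob_space N by fact
  define E where "E = {w\<in>space N. c < Y w}"
  have E: "E \<in> sets N" unfolding E_def using Y by measurable
  have ind: "integrable N (\<lambda>w. h * indicator E w)"
    using E by (intro integrable_mult_right) (simp add: integrable_indicator_iff emeasure_eq_measure)
  have "(\<integral>w. (Y w - h) * indicator {c<..} (Y w) \<partial>N) =
        (\<integral>w. Y w * indicator {c<..} (Y w) - h * indicator E w \<partial>N)"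
    by (rule Bochner_Integration.integral_cong) (auto simp: indicator_def E_def)
  also have "\<dots> = (\<integral>w. Y w * indicator {c<..} (Y w) \<partial>N) - h * measure N E"
    using E by (simp add: Bochner_Integration.integral_diff[OF integrable_trunc[OF Y] ind])
  finally show ?thesis unfolding E_def .
qed

text \<open>Since (Y - h) 1_{Y > c} \<le> (Y - h) 1_{Y > h} pointwise, the excess over h is
  largest on the event {Y > h}.  Applied at a level h1 with P(Y > h1) = q this
  bounds the truncated mean at h1 by quantities at any other level h.\<close>
lemma trunc_excess_maximal:
  fixes Y :: "'a \<Rightarrow> real"
  assumes N: "prob_space N" and Y: "integrable N Y"
    and h1: "measure N {w\<in>space N. h1 < Y w} = q"
  shows "(\<integral>w. Y w * indicator {h1<..} (Y w) \<partial>N) \<le>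
         (\<integral>w. Y w * indicator {h<..} (Y w) \<partial>N) - h * measure N {w\<in>space N. h < Y w} + h * q"
proof -
  interpret prob_space N by fact
  have "integrable N (\<lambda>w. indicator {c<..} (Y w) :: real)" for c
    by (rule integrable_const_bound[where B=1]) (use Y in \<open>auto simp: indicator_def\<close>)
  then have int: "integrable N (\<lambda>w. (Y w - h) * indicator {c<..} (Y w))" for c
    using integrable_trunc[OF Y, of c]
    by (simp add: left_diff_distrib Bochner_Integration.integrable_diff integrable_mult_right)
  have "(\<integral>w. (Y w - h) * indicator {h1<..} (Y w) \<partial>N) \<le> (\<integral>w. (Y w - h) * indicator {h<..} (Y w) \<partial>N)"
    by (rule integral_mono[OF int int]) (auto simp: indicator_def)
  then show ?thesis
    using trunc_excess_eq[OF N Y, of h h1] trunc_excess_eq[OF N Y, of h h] h1 by simp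
qed

subsection \<open>Exceedance thresholds\<close>

lemma exc_threshold_bounds:
  assumes t0: "0 \<le> t0" "measure M {w\<in>space M. t0 < X w} \<le> q"
  shows "0 \<le> exc_threshold M X q"
    and "\<And>t. 0 \<le> t \<Longrightarrow> measure M {w\<in>space M. t < X w} \<le> q \<Longrightarrow> exc_threshold M X q \<le> t"
proof -
  define A where "A = {h. 0 \<le> h \<and> measure M {w \<in> space M. X w > h} \<le> q}"
  have thr: "exc_threshold M X q = Inf A" unfolding A_def exc_threshold_def ..
  have "t0 \<in> A" using t0 unfolding A_def by auto
  then show "0 \<le> exc_threshold M X q" unfolding thr by (intro cInf_greatest) (auto simp: A_def)
  have "bdd_below A" unfolding A_def by (rule bdd_belowI[of _ 0]) auto
  then show "exc_threshold M X q \<le> t" if "0 \<le> t" "measure M {w\<in>space M. t < X w} \<le> q" for t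
    unfolding thr using that by (intro cInf_lower) (auto simp: A_def)
qed

text \<open>If the tail function is continuous, a positive threshold is not exceeded
  with probability less than q: otherwise the tail would stay below q slightly to
  the left of the threshold, contradicting minimality.\<close>
lemma exc_threshold_tail_ge:
  assumes t0: "0 \<le> t0" "measure M {w\<in>space M. t0 < X w} \<le> q"
    and cont: "continuous_on {0<..} (\<lambda>t. measure M {w\<in>space M. t < X w})"
    and pos: "0 < exc_threshold M X q"
  shows "q \<le> measure M {w\<in>space M. exc_threshold M X q < X w}"
proof (rule ccontr)
  define S where "S = (\<lambda>t. measure M {w\<in>space M. t < X w})"
  define h where "h = exc_threshold M X q"
  assume "\<not> q \<le> measure M {w\<in>space M. exc_threshold M X q < X w}"
  then have "S h < q" unfolding S_def h_def by simp
  moreover have "isCont S h"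
    using cont pos continuous_on_eq_continuous_at[of "{0<..}" S] unfolding S_def h_def by auto
  ultimately have "eventually (\<lambda>t. S t < q) (at h)"
    by (intro order_tendstoD(2)) (auto simp: isCont_def)
  then obtain d where d: "d > 0" and near: "\<And>t. t \<noteq> h \<Longrightarrow> dist t h < d \<Longrightarrow> S t < q"
    unfolding eventually_at by blast
  define t where "t = max (h / 2) (h - d / 2)"
  have t: "0 < t" "t < h" "dist t h < d"
    using pos d unfolding t_def h_def dist_real_def by auto
  then have "h \<le> t"
    using exc_threshold_bounds(2)[OF t0, of t] near[of t] unfolding S_def h_def by auto
  with t show False by simp
qed

subsection \<open>Mixtures\<close>

definition is_mixture ::
  "'b measure \<Rightarrow> ('b \<Rightarrow> real) \<Rightarrow> 'i set \<Rightarrow> ('i \<Rightarrow> real) \<Rightarrow> ('i \<Rightarrow> 'a measure) \<Rightarrow> ('i \<Rightarrow> 'a \<Rightarrow> real) \<Rightarrow> bool"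
where
  "is_mixture M X I \<omega> Ms Xs \<longleftrightarrow> (\<forall>A \<in> sets borel. measure M (X -` A \<inter> space M) =
     (\<Sum>i\<in>I. \<omega> i * measure (Ms i) (Xs i -` A \<inter> space (Ms i))))"

lemma mixture_tail:
  assumes "is_mixture M X I \<omega> Ms Xs"
  shows "measure M {w\<in>space M. t < X w} = (\<Sum>i\<in>I. \<omega> i * measure (Ms i) {w\<in>space (Ms i). t < Xs i w})"
proof -
  have "measure M (X -` {t<..} \<inter> space M) =
      (\<Sum>i\<in>I. \<omega> i * measure (Ms i) (Xs i -` {t<..} \<inter> space (Ms i)))"
    using assms unfolding is_mixture_def by simp
  moreover have "X -` {t<..} \<inter> space M = {w\<in>space M. t < X w}" by auto
  moreover have "Xs i -` {t<..} \<inter> space (Ms i) = {w\<in>space (Ms i). t < Xs i w}" for i by auto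
  ultimately show ?thesis by simp
qed

text \<open>Tail functions are monotone, hence Borel measurable.\<close>
lemma tail_borel_measurable:
  assumes "finite_measure N" and Y: "Y \<in> borel_measurable N"
  shows "(\<lambda>t::real. measure N {w\<in>space N. max h t < Y w}) \<in> borel_measurable borel"
proof -
  interpret finite_measure N by fact
  have "mono (\<lambda>t::real. - measure N {w\<in>space N. max h t < Y w})"
  proof (rule monoI)
    fix s t :: real assume "s \<le> t"
    then have "measure N {w\<in>space N. max h t < Y w} \<le> measure N {w\<in>space N. max h s < Y w}"
      using Y by (intro finite_measure_mono) auto
    then show "- measure N {w\<in>space N. max h s < Y w} \<le> - measure N {w\<in>space N. max h t < Y w}"
      by simp
  qed
  from borel_measurable_uminus[OF borel_measurable_mono[OF this]] show ?thesis by simp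
qed

text \<open>Truncated means of a mixture, in nonnegative-integral form: by the layer-cake
  formula they only depend on tails, which mix linearly.\<close>
lemma mixture_trunc_nn_integral:
  fixes X :: "'b \<Rightarrow> real" and Xs :: "'i \<Rightarrow> 'a \<Rightarrow> real"
  assumes M: "prob_space M" and X: "X \<in> borel_measurable M" and I: "finite I"
    and Ms: "\<And>i. i \<in> I \<Longrightarrow> prob_space (Ms i)"
    and Xs: "\<And>i. i \<in> I \<Longrightarrow> Xs i \<in> borel_measurable (Ms i)"
    and \<omega>: "\<And>i. i \<in> I \<Longrightarrow> 0 \<le> \<omega> i"
    and mix: "is_mixture M X I \<omega> Ms Xs" and h: "0 \<le> h"
  shows "(\<integral>\<^sup>+w. ennreal (X w * indicator {h<..} (X w)) \<partial>M) =
     (\<Sum>i\<in>I. ennreal (\<omega> i) * (\<integral>\<^sup>+w. ennreal (Xs i w * indicator {h<..} (Xs i w)) \<partial>Ms i))"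
proof -
  define T where "T = (\<lambda>i t. measure (Ms i) {w\<in>space (Ms i). max h t < Xs i w})"
  have T: "T i \<in> borel_measurable borel" if "i \<in> I" for i
    unfolding T_def using Ms[OF that] Xs[OF that]
    by (intro tail_borel_measurable) (auto simp: prob_space_def)
  have trunc_i: "(\<integral>\<^sup>+w. ennreal (Xs i w * indicator {h<..} (Xs i w)) \<partial>Ms i) =
      (\<integral>\<^sup>+t. indicator {0..} t * ennreal (T i t) \<partial>lborel)" if i: "i \<in> I" for i
  proof -
    interpret prob_space "Ms i" using Ms[OF i] .
    show ?thesis
      using layer_cake_trunc[OF prob_space_imp_sigma_finite[OF Ms[OF i]] Xs[OF i] h]
      by (simp add: T_def emeasure_eq_measure)
  qed
  have tail: "emeasure M {w\<in>space M. max h t < X w} = (\<Sum>i\<in>I. ennreal (\<omega> i) * ennreal (T i t))" for t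
  proof -
    interpret prob_space M by fact
    have "measure M {w\<in>space M. max h t < X w} = (\<Sum>i\<in>I. \<omega> i * T i t)"
      unfolding T_def by (rule mixture_tail[OF mix])
    then have "emeasure M {w\<in>space M. max h t < X w} = ennreal (\<Sum>i\<in>I. \<omega> i * T i t)"
      by (simp add: emeasure_eq_measure)
    also have "\<dots> = (\<Sum>i\<in>I. ennreal (\<omega> i) * ennreal (T i t))"
      using \<omega> by (subst sum_ennreal[symmetric]) (auto simp: ennreal_mult T_def)
    finally show ?thesis .
  qed
  have "(\<integral>\<^sup>+w. ennreal (X w * indicator {h<..} (X w)) \<partial>M) =
        (\<integral>\<^sup>+t. indicator {0..} t * emeasure M {w\<in>space M. max h t < X w} \<partial>lborel)"
    by (rule layer_cake_trunc[OF prob_space_imp_sigma_finite[OF M] X h])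
  also have "\<dots> = (\<integral>\<^sup>+t. (\<Sum>i\<in>I. ennreal (\<omega> i) * (indicator {0..} t * ennreal (T i t))) \<partial>lborel)"
    unfolding tail by (simp add: sum_distrib_left mult.left_commute)
  also have "\<dots> = (\<Sum>i\<in>I. ennreal (\<omega> i) * (\<integral>\<^sup>+t. indicator {0..} t * ennreal (T i t) \<partial>lborel))"
    using T by (subst nn_integral_sum) (auto intro!: sum.cong nn_integral_cmult)
  finally show ?thesis by (simp add: trunc_i)
qed

lemma mixture_trunc_integral:
  fixes X :: "'b \<Rightarrow> real" and Xs :: "'i \<Rightarrow> 'a \<Rightarrow> real"
  assumes M: "prob_space M" and X: "X \<in> borel_measurable M" and I: "finite I"
    and Ms: "\<And>i. i \<in> I \<Longrightarrow> prob_space (Ms i)"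
    and Xs: "\<And>i. i \<in> I \<Longrightarrow> integrable (Ms i) (Xs i)"
    and \<omega>: "\<And>i. i \<in> I \<Longrightarrow> 0 \<le> \<omega> i"
    and mix: "is_mixture M X I \<omega> Ms Xs" and h: "0 \<le> h"
  shows "(\<integral>w. X w * indicator {h<..} (X w) \<partial>M) =
     (\<Sum>i\<in>I. \<omega> i * (\<integral>w. Xs i w * indicator {h<..} (Xs i w) \<partial>Ms i))"
proof -
  have nn: "0 \<le> Y w * indicator {h<..} (Y w)" for Y :: "'c \<Rightarrow> real" and w
    using h by (auto simp: indicator_def)
  have ip: "0 \<le> (\<integral>w. Xs i w * indicator {h<..} (Xs i w) \<partial>Ms i)" for i
    by (intro integral_nonneg_AE AE_I2 nn)
  have "(\<integral>\<^sup>+w. ennreal (Xs i w * indicator {h<..} (Xs i w)) \<partial>Ms i) =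
      ennreal (\<integral>w. Xs i w * indicator {h<..} (Xs i w) \<partial>Ms i)" if i: "i \<in> I" for i
    by (rule nn_integral_eq_integral) (use integrable_trunc[OF Xs[OF i]] in \<open>auto intro!: AE_I2 nn\<close>)
  then have "(\<integral>\<^sup>+w. ennreal (X w * indicator {h<..} (X w)) \<partial>M) =
      ennreal (\<Sum>i\<in>I. \<omega> i * (\<integral>w. Xs i w * indicator {h<..} (Xs i w) \<partial>Ms i))"
    using mixture_trunc_nn_integral[OF M X I Ms _ \<omega> mix h] Xs \<omega> ip
    by (subst sum_ennreal[symmetric]) (auto intro!: sum.cong simp: ennreal_mult')
  moreover have "0 \<le> (\<Sum>i\<in>I. \<omega> i * (\<integral>w. Xs i w * indicator {h<..} (Xs i w) \<partial>Ms i))"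
    using \<omega> ip by (auto intro!: sum_nonneg)
  moreover have "(\<integral>w. X w * indicator {h<..} (X w) \<partial>M) =
      enn2real (\<integral>\<^sup>+w. ennreal (X w * indicator {h<..} (X w)) \<partial>M)"
    by (rule integral_eq_nn_integral) (use X in \<open>auto intro!: AE_I2 nn\<close>)
  ultimately show ?thesis by simp
qed

lemma integral_trunc_zero:
  fixes Y :: "'a \<Rightarrow> real"
  assumes Y: "Y \<in> borel_measurable N" and pos: "AE w in N. 0 < Y w"
  shows "(\<integral>w. Y w * indicator {0<..} (Y w) \<partial>N) = (\<integral>w. Y w \<partial>N)"
  by (rule integral_cong_AE) (use Y pos in \<open>auto simp: indicator_def\<close>)

lemma mixture_mean:
  fixes X :: "'b \<Rightarrow> real" and Xs :: "'i \<Rightarrow> 'a \<Rightarrow> real"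
  assumes M: "prob_space M" and X: "X \<in> borel_measurable M" and I: "finite I"
    and \<omega>: "\<And>i. i \<in> I \<Longrightarrow> 0 \<le> \<omega> i" and \<omega>1: "(\<Sum>i\<in>I. \<omega> i) = 1"
    and mix: "is_mixture M X I \<omega> Ms Xs"
    and Ms: "\<And>i. i \<in> I \<Longrightarrow> prob_space (Ms i)"
    and int: "\<And>i. i \<in> I \<Longrightarrow> integrable (Ms i) (Xs i)"
    and pos: "\<And>i. i \<in> I \<Longrightarrow> AE w in Ms i. 0 < Xs i w"
  shows "(\<integral>w. X w \<partial>M) = (\<Sum>i\<in>I. \<omega> i * (\<integral>w. Xs i w \<partial>Ms i))"
proof -
  interpret prob_space M by fact
  have "measure (Ms i) {w\<in>space (Ms i). 0 < Xs i w} = 1" if i: "i \<in> I" for i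
    using prob_space.prob_Collect_eq_1[OF Ms[OF i]] pos[OF i] int[OF i] by simp
  then have "measure M {w\<in>space M. 0 < X w} = 1"
    using \<omega>1 by (simp add: mixture_tail[OF mix])
  then have "AE w in M. 0 < X w"
    using prob_Collect_eq_1[of "\<lambda>w. 0 < X w"] X by simp
  then have "(\<integral>w. X w \<partial>M) = (\<integral>w. X w * indicator {0<..} (X w) \<partial>M)"
    using integral_trunc_zero[OF X] by simp
  also have "\<dots> = (\<Sum>i\<in>I. \<omega> i * (\<integral>w. Xs i w * indicator {0<..} (Xs i w) \<partial>Ms i))"
    by (rule mixture_trunc_integral[OF M X I Ms int \<omega> mix]) auto
  also have "\<dots> = (\<Sum>i\<in>I. \<omega> i * (\<integral>w. Xs i w \<partial>Ms i))"
    using int pos by (intro sum.cong refl) (simp add: integral_trunc_zero)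
  finally show ?thesis .
qed

text \<open>Each component's
  contribution is bounded, by the variational inequality, through quantities at
  the mixture's threshold h; averaging them gives \<kappa>(X) - h (P(X > h) - q), and
  h (P(X > h) - q) \<ge> 0 by continuity of the mixture's tail.\<close>
lemma mixture_qcontrib_ge:
  fixes X :: "'b \<Rightarrow> real" and Xs :: "'i \<Rightarrow> 'a \<Rightarrow> real"
  assumes M: "prob_space M" and X: "X \<in> borel_measurable M" and I: "finite I"
    and \<omega>: "\<And>i. i \<in> I \<Longrightarrow> 0 \<le> \<omega> i" and \<omega>1: "(\<Sum>i\<in>I. \<omega> i) = 1"
    and mix: "is_mixture M X I \<omega> Ms Xs"
    and Ms: "\<And>i. i \<in> I \<Longrightarrow> prob_space (Ms i)"
    and int: "\<And>i. i \<in> I \<Longrightarrow> integrable (Ms i) (Xs i)"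
    and pos: "\<And>i. i \<in> I \<Longrightarrow> AE w in Ms i. 0 < Xs i w"
    and mean: "\<And>i. i \<in> I \<Longrightarrow> (\<integral>w. Xs i w \<partial>Ms i) = 1"
    and thr_nonneg: "\<And>i. i \<in> I \<Longrightarrow> 0 \<le> exc_threshold (Ms i) (Xs i) q"
    and thr_tail: "\<And>i. i \<in> I \<Longrightarrow>
      measure (Ms i) {w\<in>space (Ms i). exc_threshold (Ms i) (Xs i) q < Xs i w} = q"
    and cont: "\<And>i. i \<in> I \<Longrightarrow>
      continuous_on {0<..} (\<lambda>t. measure (Ms i) {w\<in>space (Ms i). t < Xs i w})"
  shows "(\<Sum>i\<in>I. \<omega> i * qcontrib (Ms i) (Xs i) q) \<le> qcontrib M X q"
proof -
  define h where "h = exc_threshold M X q"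
  define hi where "hi i = exc_threshold (Ms i) (Xs i) q" for i
  define S where "S t = measure M {w\<in>space M. t < X w}" for t
  define Si where "Si i t = measure (Ms i) {w\<in>space (Ms i). t < Xs i w}" for i t
  define Ei where "Ei i c = (\<integral>w. Xs i w * indicator {c<..} (Xs i w) \<partial>Ms i)" for i c
  have S_mix: "S = (\<lambda>t. \<Sum>i\<in>I. \<omega> i * Si i t)"
    unfolding S_def Si_def by (simp add: mixture_tail[OF mix])
  have mean_X: "(\<integral>w. X w \<partial>M) = 1"
    using mixture_mean[OF M X I \<omega> \<omega>1 mix Ms int pos] mean \<omega>1 by simp
  define t0 where "t0 = (\<Sum>i\<in>I. hi i)"
  have t0: "0 \<le> t0" "S t0 \<le> q"
  proof -
    show "0 \<le> t0" unfolding t0_def hi_def using thr_nonneg by (simp add: sum_nonneg)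
    have "Si i t0 \<le> Si i (hi i)" if i: "i \<in> I" for i
    proof -
      interpret prob_space "Ms i" using Ms[OF i] .
      have "hi i \<le> t0" unfolding t0_def using I i thr_nonneg hi_def by (intro member_le_sum) auto
      then show ?thesis unfolding Si_def using int[OF i] by (intro finite_measure_mono) auto
    qed
    then have "S t0 \<le> (\<Sum>i\<in>I. \<omega> i * q)"
      unfolding S_mix using \<omega> thr_tail by (intro sum_mono mult_left_mono) (auto simp: Si_def hi_def)
    then show "S t0 \<le> q" using \<omega>1 by (simp add: sum_distrib_right[symmetric])
  qed
  have h0: "0 \<le> h" unfolding h_def by (rule exc_threshold_bounds(1)) (use t0 in \<open>auto simp: S_def\<close>)
  have S_cont: "continuous_on {0<..} S"
    unfolding S_mix using cont by (intro continuous_on_sum continuous_on_mult_left) (auto simp: Si_def)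
  have excess: "h * q \<le> h * S h"
  proof (cases "h = 0")
    case False
    then have "q \<le> S h"
      using exc_threshold_tail_ge[of t0 M X q] t0 S_cont h0 unfolding S_def h_def by auto
    then show ?thesis using h0 by (simp add: mult_left_mono)
  qed simp
  have comp: "qcontrib (Ms i) (Xs i) q \<le> Ei i h - h * Si i h + h * q" if i: "i \<in> I" for i
    using trunc_excess_maximal[OF Ms[OF i] int[OF i] thr_tail[OF i], of h] mean[OF i]
    unfolding qcontrib_def Ei_def Si_def by simp
  have "(\<Sum>i\<in>I. \<omega> i * qcontrib (Ms i) (Xs i) q) \<le> (\<Sum>i\<in>I. \<omega> i * (Ei i h - h * Si i h + h * q))"
    using comp \<omega> by (intro sum_mono mult_left_mono) auto
  also have "\<dots> = (\<Sum>i\<in>I. \<omega> i * Ei i h) - h * S h + h * q * (\<Sum>i\<in>I. \<omega> i)"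
    unfolding S_mix by (simp add: algebra_simps sum.distrib sum_subtractf sum_distrib_left)
  also have "\<dots> = (\<integral>w. X w * indicator {h<..} (X w) \<partial>M) - h * S h + h * q"
    using mixture_trunc_integral[OF M X I Ms int \<omega> mix h0] \<omega>1 by (simp add: Ei_def)
  also have "\<dots> \<le> qcontrib M X q"
    using excess mean_X unfolding qcontrib_def h_def by simp
  finally show ?thesis .
qed

subsection \<open>Pareto variables\<close>

lemma pareto_prob_space: "is_pareto M X a xm \<Longrightarrow> prob_space M"
  and pareto_measurable: "is_pareto M X a xm \<Longrightarrow> X \<in> borel_measurable M"
  and pareto_scale_pos: "is_pareto M X a xm \<Longrightarrow> 0 < xm"
  by (simp_all add: is_pareto_def)

lemma pareto_tail_below:
  assumes P: "is_pareto M X a xm" and t: "t \<le> xm"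
  shows "measure M {w\<in>space M. t < X w} = 1"
proof -
  interpret prob_space M using pareto_prob_space[OF P] .
  have "measure M {w\<in>space M. xm < X w} = 1"
    using P pareto_scale_pos[OF P] by (simp add: is_pareto_def)
  moreover have "measure M {w\<in>space M. xm < X w} \<le> measure M {w\<in>space M. t < X w}"
    using t pareto_measurable[OF P] by (intro finite_measure_mono) auto
  ultimately show ?thesis using prob_le_1[of "{w\<in>space M. t < X w}"] by linarith
qed

lemma pareto_AE_gt_scale:
  assumes P: "is_pareto M X a xm"
  shows "AE w in M. xm < X w"
  using prob_space.AE_prob_1[OF pareto_prob_space[OF P], of "{w\<in>space M. xm < X w}"]
    pareto_tail_below[OF P order_refl] by auto

lemma pareto_tail_min:
  assumes P: "is_pareto M X a xm" and a: "0 \<le> a" and t: "0 < t"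
  shows "measure M {w\<in>space M. t < X w} = min 1 ((t / xm) powr (-a))"
proof (cases "xm \<le> t")
  case True
  have "(t / xm) powr (-a) \<le> 1 powr (-a)"
    using True pareto_scale_pos[OF P] a by (intro powr_mono2') auto
  then show ?thesis using P True by (simp add: is_pareto_def)
next
  case False
  have "1 powr (-a) \<le> (t / xm) powr (-a)"
    using False pareto_scale_pos[OF P] a t by (intro powr_mono2') auto
  then show ?thesis using pareto_tail_below[OF P] False by simp
qed

lemma pareto_tail_continuous:
  assumes P: "is_pareto M X a xm" and a: "0 \<le> a"
  shows "continuous_on {0<..} (\<lambda>t. measure M {w\<in>space M. t < X w})"
proof -
  have "continuous_on {0<..} (\<lambda>t. min 1 ((t / xm) powr (-a)))"
    using pareto_scale_pos[OF P] by (intro continuous_intros) auto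
  then show ?thesis
    by (rule continuous_on_cong[THEN iffD1, rotated 2]) (auto simp: pareto_tail_min[OF P a])
qed

lemma pareto_tail_emeasure:
  assumes P: "is_pareto M X a xm" and x: "xm \<le> x"
  shows "emeasure M {w\<in>space M. x < X w} = ennreal ((x / xm) powr (-a))"
proof -
  interpret prob_space M using pareto_prob_space[OF P] .
  have "{w\<in>space M. x < X w} \<in> sets M" using pareto_measurable[OF P] by measurable
  then show ?thesis using P x unfolding is_pareto_def by (simp add: emeasure_eq_measure)
qed

text \<open>Truncated mean above a level h \<ge> xm, via the layer-cake formula: the tail of
  X 1_{X > h} is (h/xm)^(-a) on [0, h) and (t/xm)^(-a) beyond.\<close>
lemma pareto_trunc_nn_integral:
  assumes P: "is_pareto M X a xm" and a: "a > 1" and h: "xm \<le> h"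
  shows "(\<integral>\<^sup>+w. ennreal (X w * indicator {h<..} (X w)) \<partial>M) =
         ennreal (a / (a - 1) * xm powr a * h powr (1 - a))"
proof -
  have xm: "xm > 0" using pareto_scale_pos[OF P] .
  have h0: "0 < h" using xm h by simp
  define c where "c = xm powr a * h powr (1 - a)"
  have c: "0 \<le> c" unfolding c_def by simp
  have "(\<integral>\<^sup>+w. ennreal (X w * indicator {h<..} (X w)) \<partial>M) =
         (\<integral>\<^sup>+t. indicator {0..} t * emeasure M {w\<in>space M. max h t < X w} \<partial>lborel)"
    using layer_cake_trunc[OF prob_space_imp_sigma_finite[OF pareto_prob_space[OF P]]
        pareto_measurable[OF P]] h0 by simp
  also have "\<dots> = (\<integral>\<^sup>+t. ennreal ((h / xm) powr (-a)) * indicator {0..<h} t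
                    + ennreal (indicator {h..} t * (xm powr a * t powr (-a))) \<partial>lborel)"
  proof (rule nn_integral_cong)
    fix t :: real
    have "t \<ge> h \<Longrightarrow> (t / xm) powr (-a) = xm powr a * t powr (-a)"
      using xm h0 by (simp add: powr_divide powr_minus field_simps)
    then show "indicator {0..} t * emeasure M {w\<in>space M. max h t < X w} =
          ennreal ((h / xm) powr (-a)) * indicator {0..<h} t
                    + ennreal (indicator {h..} t * (xm powr a * t powr (-a)))"
      using pareto_tail_emeasure[OF P, of "max h t"] h h0
      by (cases "t < h") (auto simp: indicator_def max_def)
  qed
  also have "\<dots> = ennreal ((h / xm) powr (-a)) * ennreal h
                 + (\<integral>\<^sup>+t. ennreal (indicator {h..} t * (xm powr a * t powr (-a))) \<partial>lborel)"
    using h0 by (subst nn_integral_add) (auto simp: nn_integral_cmult)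
  also have "(\<integral>\<^sup>+t. ennreal (indicator {h..} t * (xm powr a * t powr (-a))) \<partial>lborel)
     = ennreal (xm powr a * (- (h powr (-a + 1)) / (-a + 1)))"
  proof (rule nn_integral_has_integral_lborel)
    have "((\<lambda>t. xm powr a * t powr (-a)) has_integral xm powr a * (- (h powr (-a + 1)) / (-a + 1))) {h..}"
      by (intro has_integral_mult_right has_integral_powr_to_inf) (use a h0 in auto)
    moreover have "(\<lambda>t. indicator {h..} t * (xm powr a * t powr (-a))) =
        (\<lambda>t. if t \<in> {h..} then xm powr a * t powr (-a) else 0)"
      by (auto simp: indicator_def)
    ultimately show "((\<lambda>t. indicator {h..} t * (xm powr a * t powr (-a))) has_integral
               xm powr a * (- (h powr (-a + 1)) / (-a + 1))) UNIV"
      by (simp only: has_integral_restrict_UNIV)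
  qed (auto simp: indicator_def)
  also have "\<dots> = ennreal (c / (a - 1))"
    using a by (simp add: c_def field_simps)
  also have "ennreal ((h / xm) powr (-a)) * ennreal h = ennreal c"
    using xm h0 by (simp add: ennreal_mult'[symmetric] c_def powr_divide powr_minus powr_diff field_simps)
  also have "ennreal c + ennreal (c / (a - 1)) = ennreal (a / (a - 1) * c)"
    using c a by (simp add: ennreal_plus[symmetric] field_simps)
  finally show ?thesis by (simp add: c_def mult.assoc)
qed

lemma pareto_trunc_integral:
  assumes P: "is_pareto M X a xm" and a: "a > 1" and h: "xm \<le> h"
  shows "(\<integral>w. X w * indicator {h<..} (X w) \<partial>M) = a / (a - 1) * xm powr a * h powr (1 - a)"
proof -
  have nn: "0 \<le> X w * indicator {h<..} (X w)" for w
    using pareto_scale_pos[OF P] h by (auto simp: indicator_def)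
  have "(\<integral>w. X w * indicator {h<..} (X w) \<partial>M) =
      enn2real (\<integral>\<^sup>+w. ennreal (X w * indicator {h<..} (X w)) \<partial>M)"
    by (rule integral_eq_nn_integral) (use pareto_measurable[OF P] nn in auto)
  then show ?thesis using a by (simp add: pareto_trunc_nn_integral[OF P a h])
qed

text \<open>The mean is the truncated mean at the scale, a xm / (a - 1).\<close>
lemma pareto_mean:
  assumes P: "is_pareto M X a xm" and a: "a > 1"
  shows "(\<integral>w. X w \<partial>M) = a * xm / (a - 1)"
proof -
  have xm: "xm > 0" using pareto_scale_pos[OF P] .
  have "(\<integral>w. X w \<partial>M) = (\<integral>w. X w * indicator {xm<..} (X w) \<partial>M)"
    by (rule integral_cong_AE) (use pareto_measurable[OF P] pareto_AE_gt_scale[OF P] in auto)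
  also have "\<dots> = a * xm / (a - 1)"
    using xm by (simp add: pareto_trunc_integral[OF P a] powr_add[symmetric])
  finally show ?thesis .
qed

text \<open>For a > 1 the mean is finite and nonzero, hence X is integrable.\<close>
lemma pareto_integrable:
  assumes P: "is_pareto M X a xm" and a: "a > 1"
  shows "integrable M X"
proof -
  have "(\<integral>w. X w \<partial>M) \<noteq> 0"
    using pareto_mean[OF P a] pareto_scale_pos[OF P] a by simp
  then show ?thesis using not_integrable_integral_eq by blast
qed

lemma pareto_threshold:
  assumes P: "is_pareto M X a xm" and a: "a > 1" and q: "0 < q" "q < 1"
  shows "exc_threshold M X q = xm * q powr (-1/a)"
    and "measure M {w\<in>space M. xm * q powr (-1/a) < X w} = q"
proof -
  have xm: "xm > 0" using pareto_scale_pos[OF P] .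
  define h0 where "h0 = xm * q powr (-1/a)"
  have "1 powr (-1/a) \<le> q powr (-1/a)"
    using q a by (intro powr_mono2') auto
  then have h0_ge: "xm \<le> h0" using xm unfolding h0_def by simp
  have "(h0 / xm) powr (-a) = q"
    using xm q a unfolding h0_def by (simp add: powr_powr)
  then have tail_h0: "measure M {w\<in>space M. h0 < X w} = q"
    using P h0_ge by (simp add: is_pareto_def)
  have tail_le: "measure M {w\<in>space M. h < X w} \<le> q \<longleftrightarrow> h0 \<le> h" if "xm < h" for h
  proof -
    have "(h / xm) powr (-a) \<le> (h0 / xm) powr (-a) \<longleftrightarrow> h0 \<le> h"
    proof
      assume le: "(h / xm) powr (-a) \<le> (h0 / xm) powr (-a)"
      show "h0 \<le> h"
      proof (rule ccontr)
        assume "\<not> h0 \<le> h"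
        then have "(h0 / xm) powr (-a) < (h / xm) powr (-a)"
          using xm a that by (intro powr_less_mono2_neg) (auto simp: divide_strict_right_mono)
        with le show False by simp
      qed
    next
      assume "h0 \<le> h"
      then show "(h / xm) powr (-a) \<le> (h0 / xm) powr (-a)"
        using xm a h0_ge by (intro powr_mono2') (auto simp: divide_right_mono)
    qed
    then show ?thesis
      using P that \<open>(h0 / xm) powr (-a) = q\<close> by (simp add: is_pareto_def)
  qed
  have "{h. 0 \<le> h \<and> measure M {w \<in> space M. X w > h} \<le> q} = {h0..}"
  proof (intro set_eqI iffI)
    fix h assume "h \<in> {h. 0 \<le> h \<and> measure M {w \<in> space M. X w > h} \<le> q}"
    then have "xm < h" and "measure M {w\<in>space M. h < X w} \<le> q"
      using pareto_tail_below[OF P, of h] q by (auto simp: not_le[symmetric])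
    then show "h \<in> {h0..}" using tail_le by simp
  next
    fix h assume "h \<in> {h0..}"
    then show "h \<in> {h. 0 \<le> h \<and> measure M {w \<in> space M. X w > h} \<le> q}"
      using tail_le[of h] tail_h0 h0_ge xm by (cases "h = h0") auto
  qed
  then show "exc_threshold M X q = xm * q powr (-1/a)"
    unfolding exc_threshold_def h0_def[symmetric] by simp
  show "measure M {w\<in>space M. xm * q powr (-1/a) < X w} = q"
    using tail_h0 unfolding h0_def .
qed

lemma pareto_qcontrib:
  assumes P: "is_pareto M X a xm" and a: "a > 1" and q: "0 < q" "q < 1"
  shows "qcontrib M X q = q powr ((a - 1) / a)"
proof -
  have xm: "xm > 0" using pareto_scale_pos[OF P] .
  define r where "r = q powr (-1/a)"
  have r: "0 < r" "1 \<le> r" using q a powr_mono2'[of "-1/a" q 1] unfolding r_def by auto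
  have "qcontrib M X q = (a / (a - 1) * xm powr a * (xm * r) powr (1 - a)) / (a * xm / (a - 1))"
    unfolding qcontrib_def pareto_threshold(1)[OF P a q] pareto_mean[OF P a] r_def[symmetric]
    using xm r by (simp add: pareto_trunc_integral[OF P a])
  also have "\<dots> = r powr (1 - a)"
    using xm r a by (simp add: powr_mult powr_diff field_simps)
  also have "\<dots> = q powr (-1/a * (1 - a))"
    unfolding r_def by (rule powr_powr)
  also have "-1/a * (1 - a) = (a - 1) / a"
    using a by (simp add: field_simps)
  finally show ?thesis .
qed

subsection \<open>Convexity\<close>

text \<open>Strict convexity of 1/x on the positive axis, by an explicit identity for
  the convexity defect.\<close>
lemma inverse_strict_convex:
  fixes x y t :: real
  assumes x: "x > 0" and y: "y > 0" and xy: "x \<noteq> y" and t: "0 < t" "t < 1"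
  shows "1 / ((1 - t) * x + t * y) < (1 - t) / x + t / y"
proof -
  define z where "z = (1 - t) * x + t * y"
  have z: "z > 0" using x y t unfolding z_def by (intro add_pos_nonneg) auto
  have "(1 - t) / x + t / y - 1 / z = t * (1 - t) * (x - y)^2 / (x * y * z)"
    using x y z unfolding z_def by (simp add: field_simps power2_eq_square)
  moreover have "0 < t * (1 - t) * (x - y)^2 / (x * y * z)" using t xy x y z by simp
  ultimately show ?thesis unfolding z_def by linarith
qed

text \<open>Part (ii) on the level of formulas: q^((a-1)/a) = exp (ln q + L/a) with
  L = -ln q > 0, and exp is convex and increasing while L/a is strictly convex.\<close>
lemma qcontrib_formula_strict_convex:
  assumes q: "0 < q" "q < 1"
  shows "strict_convex_on {1<..} (\<lambda>a. q powr ((a - 1) / a))"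
  unfolding strict_convex_on_def
proof (intro ballI allI impI)
  fix x y t :: real
  assume x: "x \<in> {1<..}" and y: "y \<in> {1<..}" and c: "x \<noteq> y \<and> 0 < t \<and> t < 1"
  define L where "L = - ln q"
  define \<phi> where "\<phi> a = ln q + L / a" for a :: real
  define z where "z = (1 - t) * x + t * y"
  have L: "L > 0" using q unfolding L_def by simp
  have z: "z > 0" using x y c unfolding z_def by (intro add_pos_nonneg) auto
  have formula: "q powr ((a - 1) / a) = exp (\<phi> a)" if "a > 0" for a
  proof -
    have "(a - 1) / a * ln q = ln q + L / a" unfolding L_def using that by (simp add: field_simps)
    then show ?thesis using q unfolding \<phi>_def powr_def by simp
  qed
  have "1 / z < (1 - t) / x + t / y"
    using inverse_strict_convex[of x y t] x y c unfolding z_def by simp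
  then have "L * (1 / z) < L * ((1 - t) / x + t / y)"
    using L by (rule mult_strict_left_mono)
  then have "\<phi> z < (1 - t) * \<phi> x + t * \<phi> y"
    unfolding \<phi>_def by (simp add: field_simps)
  then have "exp (\<phi> z) < exp ((1 - t) * \<phi> x + t * \<phi> y)" by simp
  also have "\<dots> \<le> (1 - t) * exp (\<phi> x) + t * exp (\<phi> y)"
    using convex_onD[OF exp_convex, of t "\<phi> x" "\<phi> y"] c by simp
  finally show "q powr (((1 - t) * x + t * y - 1) / ((1 - t) * x + t * y))
      < (1 - t) * q powr ((x - 1) / x) + t * q powr ((y - 1) / y)"
    using formula x y z unfolding z_def by simp
qed

text \<open>Strict convexity implies convexity in the library's sense, so that the
  library's finite Jensen inequality applies.\<close>
lemma strict_convex_on_imp_convex_on: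
  assumes "convex S" and "strict_convex_on S f"
  shows "convex_on S f"
proof (intro convex_onI assms(1))
  fix t x y :: real assume t: "0 < t" "t < 1" and xy: "x \<in> S" "y \<in> S"
  show "f ((1 - t) *\<^sub>R x + t *\<^sub>R y) \<le> (1 - t) * f x + t * f y"
  proof (cases "x = y")
    case True
    then show ?thesis by (simp add: algebra_simps)
  next
    case False
    then have "f ((1 - t) * x + t * y) < (1 - t) * f x + t * f y"
      using assms(2) t xy unfolding strict_convex_on_def by blast
    then show ?thesis by simp
  qed
qed

lemma strict_convex_on_cong:
  fixes S :: "real set"
  assumes S: "convex S" and eq: "\<And>x. x \<in> S \<Longrightarrow> f x = g x" and g: "strict_convex_on S g"
  shows "strict_convex_on S f"
  unfolding strict_convex_on_def
proof (intro ballI allI impI)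
  fix x y t :: real assume x: "x \<in> S" and y: "y \<in> S" and c: "x \<noteq> y \<and> 0 < t \<and> t < 1"
  have "(1 - t) * x + t * y \<in> S"
    using convexD[OF S x y, of "1 - t" t] c by simp
  then show "f ((1 - t) * x + t * y) < (1 - t) * f x + t * f y"
    using g x y c eq unfolding strict_convex_on_def by simp
qed

lemma pareto_family_strict_convex:
  assumes q: "0 < q" "q < 1"
    and P: "\<forall>\<alpha>>1. is_pareto (M \<alpha>) (X \<alpha>) \<alpha> (xm \<alpha>)"
  shows "strict_convex_on {1<..} (\<lambda>\<alpha>. qcontrib (M \<alpha>) (X \<alpha>) q)"
proof -
  have "qcontrib (M \<alpha>) (X \<alpha>) q = q powr ((\<alpha> - 1) / \<alpha>)" if "\<alpha> \<in> {1<..}" for \<alpha>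
    using pareto_qcontrib[OF _ _ q, of "M \<alpha>" "X \<alpha>" \<alpha> "xm \<alpha>"] P that by auto
  then show ?thesis
    by (rule strict_convex_on_cong[OF convex_real_interval(3) _ qcontrib_formula_strict_convex[OF q]])
qed

lemma pareto_mixture_qcontrib_ge:
  fixes m :: nat and \<omega> :: "nat \<Rightarrow> real" and X :: "'b \<Rightarrow> real" and Xs :: "nat \<Rightarrow> 'a \<Rightarrow> real"
  assumes q: "0 < q" "q < 1"
    and \<alpha>: "\<And>i. i < m \<Longrightarrow> 1 < \<alpha> i" and \<omega>: "\<And>i. i < m \<Longrightarrow> 0 \<le> \<omega> i"
    and \<omega>1: "(\<Sum>i<m. \<omega> i) = 1"
    and P: "\<And>i. i < m \<Longrightarrow> is_pareto (Ms i) (Xs i) (\<alpha> i) (xms i)"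
    and mean: "\<And>i. i < m \<Longrightarrow> (\<integral>w. Xs i w \<partial>Ms i) = 1"
    and M: "prob_space M" and X: "X \<in> borel_measurable M"
    and mix: "is_mixture M X {..<m} \<omega> Ms Xs"
  shows "(\<Sum>i<m. \<omega> i * qcontrib (Ms i) (Xs i) q) \<le> qcontrib M X q"
proof (rule mixture_qcontrib_ge[OF M X finite_lessThan _ \<omega>1 mix])
  fix i assume "i \<in> {..<m}"
  then have i: "i < m" by simp
  note Pi = P[OF i] and \<alpha>i = \<alpha>[OF i]
  show "0 \<le> \<omega> i" using \<omega>[OF i] .
  show "prob_space (Ms i)" using pareto_prob_space[OF Pi] .
  show "integrable (Ms i) (Xs i)" using pareto_integrable[OF Pi \<alpha>i] .
  show "AE w in Ms i. 0 < Xs i w"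
    using pareto_AE_gt_scale[OF Pi] pareto_scale_pos[OF Pi] by auto
  show "(\<integral>w. Xs i w \<partial>Ms i) = 1" using mean[OF i] .
  show "0 \<le> exc_threshold (Ms i) (Xs i) q"
    using pareto_threshold(1)[OF Pi \<alpha>i q] pareto_scale_pos[OF Pi] by simp
  show "measure (Ms i) {w\<in>space (Ms i). exc_threshold (Ms i) (Xs i) q < Xs i w} = q"
    using pareto_threshold[OF Pi \<alpha>i q] by simp
  show "continuous_on {0<..} (\<lambda>t. measure (Ms i) {w\<in>space (Ms i). t < Xs i w})"
    using pareto_tail_continuous[OF Pi] \<alpha>i by simp
qed

text \<open>Second inequality of part (iii): Jensen's inequality for the convex map
  a \<mapsto> q^((a-1)/a) evaluated at the mean shape.\<close>
lemma pareto_mixture_jensen: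
  fixes m :: nat and \<alpha> \<omega> :: "nat \<Rightarrow> real"
  assumes q: "0 < q" "q < 1"
    and \<alpha>: "\<And>i. i < m \<Longrightarrow> 1 < \<alpha> i" and \<omega>: "\<And>i. i < m \<Longrightarrow> 0 < \<omega> i"
    and \<omega>1: "(\<Sum>i<m. \<omega> i) = 1"
    and P: "\<And>i. i < m \<Longrightarrow> is_pareto (Ms i) (Xs i) (\<alpha> i) (xms i)"
    and Pbar: "is_pareto Mbar Xbar (\<Sum>i<m. \<omega> i * \<alpha> i) xmbar"
  shows "qcontrib Mbar Xbar q \<le> (\<Sum>i<m. \<omega> i * qcontrib (Ms i) (Xs i) q)"
proof -
  have m: "m \<noteq> 0" using \<omega>1 by (cases m) auto
  have "(\<Sum>i<m. \<omega> i) < (\<Sum>i<m. \<omega> i * \<alpha> i)"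
    using m \<alpha> \<omega> by (intro sum_strict_mono) auto
  then have abar: "1 < (\<Sum>i<m. \<omega> i * \<alpha> i)" using \<omega>1 by simp
  have "convex_on {1<..} (\<lambda>a. q powr ((a - 1) / a))"
    by (intro strict_convex_on_imp_convex_on qcontrib_formula_strict_convex q convex_real_interval)
  then have "q powr (((\<Sum>i<m. \<omega> i * \<alpha> i) - 1) / (\<Sum>i<m. \<omega> i * \<alpha> i))
      \<le> (\<Sum>i<m. \<omega> i * q powr ((\<alpha> i - 1) / \<alpha> i))"
    using convex_on_sum[of "{..<m}" _ _ \<omega> \<alpha>] m \<omega>1 \<omega> \<alpha> by (auto simp: less_imp_le)
  then show ?thesis
    using pareto_qcontrib[OF Pbar abar q] pareto_qcontrib[OF P \<alpha> q] by simp
qed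

theorem mainTheorem5:
  fixes q :: real
  assumes q: "0 < q" "q < 1"
  shows
    "(\<forall>(M :: 'a measure) X \<alpha> xm. \<alpha> > 1 \<and> is_pareto M X \<alpha> xm \<longrightarrow>
        qcontrib M X q = q powr ((\<alpha> - 1) / \<alpha>))
   \<and> (\<forall>(M :: real \<Rightarrow> 'a measure) X xm.
        (\<forall>\<alpha>>1. is_pareto (M \<alpha>) (X \<alpha>) \<alpha> (xm \<alpha>)) \<longrightarrow>
        strict_convex_on {1<..} (\<lambda>\<alpha>. qcontrib (M \<alpha>) (X \<alpha>) q))
   \<and> (\<forall>(m :: nat) (\<alpha> :: nat \<Rightarrow> real) (\<omega> :: nat \<Rightarrow> real)
        (Ms :: nat \<Rightarrow> 'a measure) (Xs :: nat \<Rightarrow> 'a \<Rightarrow> real) xms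
        (M :: 'b measure) (X :: 'b \<Rightarrow> real)
        (Mbar :: 'c measure) (Xbar :: 'c \<Rightarrow> real) xmbar.
        (\<forall>i<m. \<alpha> i > 1 \<and> \<omega> i > 0) \<and> (\<Sum>i<m. \<omega> i) = 1 \<and>
        (\<forall>i<m. is_pareto (Ms i) (Xs i) (\<alpha> i) (xms i) \<and> (\<integral>w. Xs i w \<partial>(Ms i)) = 1) \<and>
        is_pareto Mbar Xbar (\<Sum>i<m. \<omega> i * \<alpha> i) xmbar \<and>
        prob_space M \<and> X \<in> borel_measurable M \<and>
        (\<forall>A \<in> sets borel. measure M (X -` A \<inter> space M) =
            (\<Sum>i<m. \<omega> i * measure (Ms i) (Xs i -` A \<inter> space (Ms i))))
      \<longrightarrow> qcontrib M X q \<ge> (\<Sum>i<m. \<omega> i * qcontrib (Ms i) (Xs i) q) \<and>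
          (\<Sum>i<m. \<omega> i * qcontrib (Ms i) (Xs i) q) \<ge> qcontrib Mbar Xbar q)"
  apply (intro conjI allI impI; (elim conjE)?)
  subgoal using pareto_qcontrib[OF _ _ q] by blast
  subgoal by (rule pareto_family_strict_convex[OF q])
  subgoal by (rule pareto_mixture_qcontrib_ge[OF q]) (auto simp: is_mixture_def less_imp_le)
  subgoal by (rule pareto_mixture_jensen[OF q]) auto
  done

end
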